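(* Let $n\ge 3$ and let $j_1,\dots,j_{n-2}$ be an enumeration (linear order) of the set $\{2,\dots,n-1\}$. For $t=1,\dots,n-2$, let $J_t$ be the maximal set of consecutive integers contained in $\{2,\dots,n-1\}\setminus\{j_1,\dots,j_{t-1}\}$ that contains $j_t$, let $ext(J_t)=\{\min J_t-1,\dots,\max J_t+1\}$, and let $T_t=\{abc\in\Lambda:\ a,c\in ext(J_t),\ a<j_t<c\}$. For $S\subseteq\{1,\dots,n-2\}$ put $T_S=\bigcup_{t\in S}T_t$. Then $\mathbf D=\{T_S: S\subseteq\{1,\dots,n-2\}\}$ consists of tilings, has exactly $2^{n-2}$ elements, is closed under $T\mapsto\Lambda\setminus T$ (i.e. is symmetric), and is a Condorcet super-domain.
   Context: Fix an integer $n\ge 3$ and write $[n]=\{1,\dots,n\}$. Let $\Lambda$ be the set of 3-element subsets of $[n]$; a triple $\{a,b,c\}$ with $a<b<c$ is written $abc$. For a 4-element subset $F=\{i<j<k<l\}$ of $[n]$, the stick of $F$ is the sequence $(ijk,\ ijl,\ ikl,\ jkl)$. A tiling (the inversion set of a rhombus tiling of the zonogon $Z(n;2)$) is a subset $T\subseteq\Lambda$ such that for every 4-element $F\subseteq[n]$, $T\cap\mathrm{stick}(F)$ is an initial segment or a final segment of the stick (empty set and whole stick allowed). For a finite set $V$ of odd cardinality and tilings $(T_v)_{v\in V}$, $sm((T_v)_{v\in V})$ is the set of triples lying in $T_v$ for more than $|V|/2$ indices $v$. A set $\mathbf D$ of tilings is a Condorcet super-domain if for every finite $V$ of odd cardinality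 and every family $(T_v)_{v\in V}$ with all $T_v\in\mathbf D$, $sm((T_v)_{v\in V})$ is a tiling. *)

theory Defs
  imports Main
begin

text \<open>Triples \<open>abc\<close> are represented as 3-element subsets of \<open>{1..n}\<close>.\<close>

definition Lambda :: "nat \<Rightarrow> nat set set" where
  "Lambda n = {X. X \<subseteq> {1..n} \<and> card X = 3}"

definition stick :: "nat \<Rightarrow> nat \<Rightarrow> nat \<Rightarrow> nat \<Rightarrow> nat set list" where
  "stick i j k l = [{i,j,k}, {i,j,l}, {i,k,l}, {j,k,l}]"

definition tiling :: "nat \<Rightarrow> nat set set \<Rightarrow> bool" where
  "tiling n T \<longleftrightarrow> T \<subseteq> Lambda n \<and>
     (\<forall>i j k l. 1 \<le> i \<and> i < j \<and> j < k \<and> k < l \<and> l \<le> n \<longrightarrow>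
        (\<exists>m \<le> 4. T \<inter> set (stick i j k l) = set (take m (stick i j k l))) \<or>
        (\<exists>m \<le> 4. T \<inter> set (stick i j k l) = set (drop m (stick i j k l))))"

definition sm :: "'v set \<Rightarrow> ('v \<Rightarrow> nat set set) \<Rightarrow> nat set set" where
  "sm V T = {x. 2 * card {v \<in> V. x \<in> T v} > card V}"

text \<open>Condorcet super-domain (voter sets are finite sets of naturals, which is no loss
  of generality since any finite index set embeds in nat).\<close>
definition condorcet_super_domain :: "nat \<Rightarrow> nat set set set \<Rightarrow> bool" where
  "condorcet_super_domain n D \<longleftrightarrow>
     (\<forall>(V :: nat set) (T :: nat \<Rightarrow> nat set set).
        finite V \<and> odd (card V) \<and> (\<forall>v\<in>V. T v \<in> D) \<longrightarrow> tiling n (sm V T))"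

definition max_block :: "nat set \<Rightarrow> nat \<Rightarrow> nat set" where
  "max_block R x = (THE I. (\<exists>a b. I = {a..b}) \<and> x \<in> I \<and> I \<subseteq> R \<and>
      (\<forall>a b. x \<in> {a..b} \<and> {a..b} \<subseteq> R \<longrightarrow> {a..b} \<subseteq> I))"

definition ext_block :: "nat set \<Rightarrow> nat set" where
  "ext_block J = {Min J - 1 .. Max J + 1}"

definition Jt :: "nat \<Rightarrow> (nat \<Rightarrow> nat) \<Rightarrow> nat \<Rightarrow> nat set" where
  "Jt n j t = max_block ({2..n-1} - j ` {1..<t}) (j t)"

definition Tt :: "nat \<Rightarrow> (nat \<Rightarrow> nat) \<Rightarrow> nat \<Rightarrow> nat set set" where
  "Tt n j t = {{a,b,c} | a b c. 1 \<le> a \<and> a < b \<and> b < c \<and> c \<le> n \<and>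
      a \<in> ext_block (Jt n j t) \<and> c \<in> ext_block (Jt n j t) \<and> a < j t \<and> j t < c}"

definition TS :: "nat \<Rightarrow> (nat \<Rightarrow> nat) \<Rightarrow> nat set \<Rightarrow> nat set set" where
  "TS n j S = (\<Union>t\<in>S. Tt n j t)"

definition domainD :: "nat \<Rightarrow> (nat \<Rightarrow> nat) \<Rightarrow> nat set set set" where
  "domainD n j = TS n j ` Pow {1..n-2}"

end

theory Submission
  imports Defs
begin

text \<open>
  Every triple \<open>abc\<close> lies in exactly one \<open>T\<^sub>t\<close>, namely for the first \<open>t\<close> in the
  enumeration with \<open>a < j\<^sub>t < c\<close>: the extended block \<open>ext(J\<^sub>t)\<close> contains \<open>a\<close> and \<open>c\<close>
  exactly when no earlier \<open>j\<^sub>s\<close> lies strictly between them. So the sets \<open>T\<^sub>S\<close> are the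
  preimages of the sets \<open>S\<close> under this index map, which is onto \<open>{1..n-2}\<close>. Complements
  and majorities of preimages are preimages of complements and majorities, and every
  preimage is a tiling, because along a stick \<open>(ijk, ijl, ikl, jkl)\<close> the index map takes
  values of the form \<open>x, y, y, z\<close> with \<open>y \<in> {x, z}\<close>.
\<close>

lemma card_3_sorted:
  fixes X :: "'a::linorder set"
  assumes "card X = 3"
  shows "\<exists>a b c. X = {a, b, c} \<and> a < b \<and> b < c"
proof -
  define xs where "xs = sorted_list_of_set X"
  have "finite X" using assms by (intro card_ge_0_finite) simp
  have "length xs = 3" using assms unfolding xs_def by simp
  then obtain a b c where abc: "xs = [a, b, c]"
    by (auto simp: numeral_eq_Suc length_Suc_conv)
  have "sorted_wrt (<) [a, b, c]"
    using strict_sorted_list_of_set[of X] unfolding xs_def[symmetric] abc .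
  moreover have "X = {a, b, c}"
    using set_sorted_list_of_set[OF \<open>finite X\<close>] unfolding xs_def[symmetric] abc by simp
  ultimately show ?thesis by auto
qed

lemma Lambda_iff:
  "X \<in> Lambda n \<longleftrightarrow> (\<exists>a b c. X = {a, b, c} \<and> 1 \<le> a \<and> a < b \<and> b < c \<and> c \<le> n)"
proof
  assume "X \<in> Lambda n"
  then have sub: "X \<subseteq> {1..n}" and "card X = 3" unfolding Lambda_def by auto
  then obtain a b c where "X = {a, b, c}" "a < b" "b < c"
    using card_3_sorted by blast
  with sub show "\<exists>a b c. X = {a, b, c} \<and> 1 \<le> a \<and> a < b \<and> b < c \<and> c \<le> n"
    by (intro exI[of _ a] exI[of _ b] exI[of _ c]) auto
next
  assume "\<exists>a b c. X = {a, b, c} \<and> 1 \<le> a \<and> a < b \<and> b < c \<and> c \<le> n"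
  then obtain a b c where "X = {a, b, c}" "1 \<le> a" "a < b" "b < c" "c \<le> n"
    by blast
  then show "X \<in> Lambda n" unfolding Lambda_def by simp
qed

lemma Least_disj_cases:
  fixes P Q :: "'a::wellorder \<Rightarrow> bool"
  shows "(LEAST x. P x \<or> Q x) = (LEAST x. P x) \<or> (LEAST x. P x \<or> Q x) = (LEAST x. Q x)"
proof (cases "\<exists>x. P x \<or> Q x")
  case True
  then have "P (LEAST x. P x \<or> Q x) \<or> Q (LEAST x. P x \<or> Q x)" by (rule LeastI_ex)
  then show ?thesis
    by (metis (no_types, lifting) Least_le LeastI order_antisym)
next
  case False
  then have "(\<lambda>x. P x \<or> Q x) = P" by auto
  then show ?thesis by simp
qed

lemma filter_take_or_drop:
  assumes "P b \<longleftrightarrow> P c" and "(P b \<longleftrightarrow> P a) \<or> (P b \<longleftrightarrow> P d)"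
  shows "(\<exists>m\<le>4. filter P [a, b, c, d] = take m [a, b, c, d]) \<or>
         (\<exists>m\<le>4. filter P [a, b, c, d] = drop m [a, b, c, d])"
proof -
  have "(\<exists>m\<le>4. Q m) \<longleftrightarrow> Q 0 \<or> Q 1 \<or> Q 2 \<or> Q 3 \<or> Q (4::nat)" for Q
    by (auto simp: le_Suc_eq numeral_eq_Suc)
  then show ?thesis
    using assms by (cases "P a"; cases "P d"; cases "P b") simp_all
qed

definition preimages :: "'a set \<Rightarrow> ('a \<Rightarrow> 'b) \<Rightarrow> 'b set \<Rightarrow> 'a set set" where
  "preimages A f I = (\<lambda>S. {x \<in> A. f x \<in> S}) ` Pow I"

lemma card_preimages:
  assumes "f ` A = I" and "finite I"
  shows "card (preimages A f I) = 2 ^ card I"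
proof -
  have "inj_on (\<lambda>S. {x \<in> A. f x \<in> S}) (Pow I)"
  proof (rule inj_onI)
    fix S S' assume "S \<in> Pow I" "S' \<in> Pow I" and eq: "{x \<in> A. f x \<in> S} = {x \<in> A. f x \<in> S'}"
    have "f ` {x \<in> A. f x \<in> T} = T" if "T \<subseteq> I" for T
      using assms(1) that by blast
    with eq show "S = S'" using \<open>S \<in> Pow I\<close> \<open>S' \<in> Pow I\<close> by (metis PowD)
  qed
  then show ?thesis
    unfolding preimages_def using assms(2) by (simp add: card_image card_Pow)
qed

lemma Diff_preimages:
  assumes "f ` A \<subseteq> I" and "T \<in> preimages A f I"
  shows "A - T \<in> preimages A f I"
proof -
  obtain S where "S \<subseteq> I" and T: "T = {x \<in> A. f x \<in> S}"
    using assms(2) unfolding preimages_def by blast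
  then have "A - T = {x \<in> A. f x \<in> I - S}" using assms(1) by auto
  then show ?thesis unfolding preimages_def by blast
qed

lemma sm_preimages:
  assumes "f ` A \<subseteq> I" and "\<forall>v\<in>V. T v \<in> preimages A f I"
  shows "sm V T \<in> preimages A f I"
proof -
  have "\<forall>v\<in>V. \<exists>S. T v = {x \<in> A. f x \<in> S}"
    using assms(2) unfolding preimages_def by blast
  then obtain S where S: "\<forall>v\<in>V. T v = {x \<in> A. f x \<in> S v}"
    by metis
  define M where "M = {i \<in> I. card V < 2 * card {v \<in> V. i \<in> S v}}"
  have "sm V T = {x \<in> A. f x \<in> M}"
  proof (rule set_eqI)
    fix x
    show "x \<in> sm V T \<longleftrightarrow> x \<in> {x \<in> A. f x \<in> M}"
    proof (cases "x \<in> A")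
      case True
      then have "{v \<in> V. x \<in> T v} = {v \<in> V. f x \<in> S v}" using S by auto
      then show ?thesis using True assms(1) unfolding sm_def M_def by auto
    next
      case False
      then have none: "{v \<in> V. x \<in> T v} = {}" using S by auto
      show ?thesis using False unfolding sm_def mem_Collect_eq none by simp
    qed
  qed
  then show ?thesis unfolding preimages_def M_def by blast
qed

lemma tiling_preimages:
  assumes stick: "\<And>i j k l. 1 \<le> i \<Longrightarrow> i < j \<Longrightarrow> j < k \<Longrightarrow> k < l \<Longrightarrow> l \<le> n \<Longrightarrow>
      f {i, j, l} = f {i, k, l} \<and> (f {i, j, l} = f {i, j, k} \<or> f {i, j, l} = f {j, k, l})"
    and "T \<in> preimages (Lambda n) f I"
  shows "tiling n T"
proof -
  obtain S where T: "T = {X \<in> Lambda n. f X \<in> S}"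
    using assms(2) unfolding preimages_def by blast
  show ?thesis
    unfolding tiling_def T
  proof (intro conjI allI impI)
    fix i j k l assume ijkl: "1 \<le> i \<and> i < j \<and> j < k \<and> k < l \<and> l \<le> n"
    let ?P = "\<lambda>X. f X \<in> S" and ?st = "stick i j k l"
    have "set ?st \<subseteq> Lambda n"
      using ijkl unfolding stick_def Lambda_def by auto
    then have inter: "{X \<in> Lambda n. ?P X} \<inter> set ?st = set (filter ?P ?st)"
      by auto
    have "(\<exists>m\<le>4. filter ?P ?st = take m ?st) \<or> (\<exists>m\<le>4. filter ?P ?st = drop m ?st)"
      unfolding stick_def by (rule filter_take_or_drop) (use stick[of i j k l] ijkl in auto)
    then show "(\<exists>m\<le>4. {X \<in> Lambda n. ?P X} \<inter> set ?st = set (take m ?st)) \<or>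
        (\<exists>m\<le>4. {X \<in> Lambda n. ?P X} \<inter> set ?st = set (drop m ?st))"
      unfolding inter by metis
  qed auto
qed

lemma max_block_exists:
  fixes R :: "nat set"
  assumes "finite R" and "x \<in> R"
  shows "\<exists>lo hi. x \<in> {lo..hi} \<and> {lo..hi} \<subseteq> R \<and>
           (\<forall>a b. x \<in> {a..b} \<and> {a..b} \<subseteq> R \<longrightarrow> {a..b} \<subseteq> {lo..hi})"
proof -
  define Lo where "Lo = {a. a \<le> x \<and> {a..x} \<subseteq> R}"
  define Hi where "Hi = {b. x \<le> b \<and> {x..b} \<subseteq> R}"
  have "finite Lo" unfolding Lo_def by simp
  moreover have "finite Hi" using assms(1) unfolding Hi_def by (rule rev_finite_subset) auto
  moreover have "x \<in> Lo" "x \<in> Hi" using assms(2) unfolding Lo_def Hi_def by auto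
  ultimately have lo: "Min Lo \<in> Lo" "\<And>a. a \<in> Lo \<Longrightarrow> Min Lo \<le> a"
    and hi: "Max Hi \<in> Hi" "\<And>b. b \<in> Hi \<Longrightarrow> b \<le> Max Hi"
    by (auto intro: Min_in Max_in)
  have "x \<in> {Min Lo..Max Hi}" using lo(1) hi(1) unfolding Lo_def Hi_def by simp
  moreover have "{Min Lo..Max Hi} \<subseteq> R"
  proof
    fix y assume "y \<in> {Min Lo..Max Hi}"
    then have "y \<in> {Min Lo..x} \<or> y \<in> {x..Max Hi}" by auto
    then show "y \<in> R" using lo(1) hi(1) unfolding Lo_def Hi_def by blast
  qed
  moreover have "{a..b} \<subseteq> {Min Lo..Max Hi}" if "x \<in> {a..b}" "{a..b} \<subseteq> R" for a b
  proof -
    have "a \<in> Lo" "b \<in> Hi" using that unfolding Lo_def Hi_def by auto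
    then show ?thesis using lo(2) hi(2) by fastforce
  qed
  ultimately show ?thesis by blast
qed

lemma max_blockE:
  assumes "finite R" and "x \<in> R"
  obtains lo hi where "max_block R x = {lo..hi}" and "x \<in> {lo..hi}" and "{lo..hi} \<subseteq> R"
    and "\<And>a b. x \<in> {a..b} \<Longrightarrow> {a..b} \<subseteq> R \<Longrightarrow> {a..b} \<subseteq> {lo..hi}"
proof -
  obtain lo hi where block: "x \<in> {lo..hi}" "{lo..hi} \<subseteq> R"
      "\<forall>a b. x \<in> {a..b} \<and> {a..b} \<subseteq> R \<longrightarrow> {a..b} \<subseteq> {lo..hi}"
    using max_block_exists[OF assms] by blast
  have "max_block R x = {lo..hi}"
    unfolding max_block_def
  proof (rule the_equality)
    show "(\<exists>a b. {lo..hi} = {a..b}) \<and> x \<in> {lo..hi} \<and> {lo..hi} \<subseteq> R \<and>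
        (\<forall>a b. x \<in> {a..b} \<and> {a..b} \<subseteq> R \<longrightarrow> {a..b} \<subseteq> {lo..hi})"
      using block by (intro conjI exI[of _ lo] exI[of _ hi]) simp_all
  next
    fix I assume I: "(\<exists>a b. I = {a..b}) \<and> x \<in> I \<and> I \<subseteq> R \<and>
      (\<forall>a b. x \<in> {a..b} \<and> {a..b} \<subseteq> R \<longrightarrow> {a..b} \<subseteq> I)"
    then obtain a b where ab: "I = {a..b}" by blast
    have "I \<subseteq> {lo..hi}" using I block(3)[rule_format, of a b] unfolding ab by simp
    moreover have "{lo..hi} \<subseteq> I" using I block(1,2) by simp
    ultimately show "I = {lo..hi}" by (rule subset_antisym)
  qed
  then show thesis
    using that block(1,2) block(3)[rule_format] by blast
qed

lemma ext_block_max_block_iff: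
  assumes "finite R" and "x \<in> R" and "a < x" and "x < c"
  shows "a \<in> ext_block (max_block R x) \<and> c \<in> ext_block (max_block R x) \<longleftrightarrow> {a<..<c} \<subseteq> R"
proof -
  obtain lo hi where block: "max_block R x = {lo..hi}" "x \<in> {lo..hi}" "{lo..hi} \<subseteq> R"
      "\<And>a b. x \<in> {a..b} \<Longrightarrow> {a..b} \<subseteq> R \<Longrightarrow> {a..b} \<subseteq> {lo..hi}"
    using max_blockE[OF assms(1,2)] by blast
  moreover have "Min {lo..hi} = lo" "Max {lo..hi} = hi"
    using block(2) by (auto intro!: Min_eqI Max_eqI)
  ultimately have ext: "ext_block (max_block R x) = {lo - 1..hi + 1}"
    unfolding ext_block_def by simp
  show ?thesis
  proof
    assume "a \<in> ext_block (max_block R x) \<and> c \<in> ext_block (max_block R x)"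
    then have "{a<..<c} \<subseteq> {lo..hi}" using ext by auto
    then show "{a<..<c} \<subseteq> R" using block(3) by blast
  next
    assume "{a<..<c} \<subseteq> R"
    then have "{a + 1..c - 1} \<subseteq> {lo..hi}"
      using block(4)[of "a + 1" "c - 1"] assms(3,4) by fastforce
    then show "a \<in> ext_block (max_block R x) \<and> c \<in> ext_block (max_block R x)"
      using ext block(2) assms(3,4) by auto
  qed
qed

definition first_split :: "nat \<Rightarrow> (nat \<Rightarrow> nat) \<Rightarrow> nat set \<Rightarrow> nat" where
  "first_split n j X = (LEAST t. t \<in> {1..n-2} \<and> Min X < j t \<and> j t < Max X)"

lemma first_split_eq_iff:
  assumes j: "bij_betw j {1..n-2} {2..n-1}" and abc: "1 \<le> a" "a < b" "b < c" "c \<le> n"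
  shows "first_split n j {a, b, c} = t \<longleftrightarrow>
    t \<in> {1..n-2} \<and> a < j t \<and> j t < c \<and> (\<forall>s\<in>{1..<t}. \<not> (a < j s \<and> j s < c))"
proof -
  define P where "P t \<longleftrightarrow> t \<in> {1..n-2} \<and> a < j t \<and> j t < c" for t
  have "a + 1 \<in> j ` {1..n-2}"
    using abc bij_betw_imp_surj_on[OF j] by auto
  then have ex: "\<exists>t. P t" unfolding P_def using abc by force
  have "first_split n j {a, b, c} = (LEAST t. P t)"
    unfolding first_split_def P_def using abc by simp
  also have "\<dots> = t \<longleftrightarrow> P t \<and> (\<forall>s<t. \<not> P s)"
    using ex by (metis LeastI_ex Least_equality not_less_Least leI)
  also have "\<dots> \<longleftrightarrow> P t \<and> (\<forall>s\<in>{1..<t}. \<not> (a < j s \<and> j s < c))"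
    unfolding P_def by auto
  finally show ?thesis unfolding P_def by blast
qed

lemma first_split_mem:
  assumes "bij_betw j {1..n-2} {2..n-1}" and "X \<in> Lambda n"
  shows "first_split n j X \<in> {1..n-2}"
  using assms first_split_eq_iff unfolding Lambda_iff by blast

lemma first_split_image:
  assumes j: "bij_betw j {1..n-2} {2..n-1}"
  shows "first_split n j ` Lambda n = {1..n-2}"
proof
  show "first_split n j ` Lambda n \<subseteq> {1..n-2}" using first_split_mem[OF j] by blast
next
  show "{1..n-2} \<subseteq> first_split n j ` Lambda n"
  proof
    fix t assume t: "t \<in> {1..n-2}"
    then have jt: "j t \<in> {2..n-1}" using bij_betwE[OF j] by blast
    have isolated: "\<not> (j t - 1 < j s \<and> j s < j t + 1)" if s: "s \<in> {1..<t}" for s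
    proof
      assume "j t - 1 < j s \<and> j s < j t + 1"
      then have "j s = j t" using jt by auto
      moreover have "s \<in> {1..n-2}" using s t by simp
      ultimately have "s = t" using t bij_betw_imp_inj_on[OF j] by (simp add: inj_on_eq_iff)
      with s show False by simp
    qed
    then have "first_split n j {j t - 1, j t, j t + 1} = t"
      using first_split_eq_iff[OF j, of "j t - 1" "j t" "j t + 1" t] isolated t jt by auto
    moreover have "{j t - 1, j t, j t + 1} \<in> Lambda n"
      unfolding Lambda_iff using jt
      by (intro exI[of _ "j t - 1"] exI[of _ "j t"] exI[of _ "j t + 1"]) auto
    ultimately show "t \<in> first_split n j ` Lambda n" by (metis image_eqI)
  qed
qed

lemma first_split_stick:
  assumes "i < p" "p < k" "k < l"
  shows "first_split n j {i, p, l} = first_split n j {i, k, l} \<and>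
    (first_split n j {i, p, l} = first_split n j {i, p, k} \<or>
     first_split n j {i, p, l} = first_split n j {p, k, l})"
proof -
  have "(\<lambda>t. t \<in> {1..n-2} \<and> i < j t \<and> j t < l) =
        (\<lambda>t. (t \<in> {1..n-2} \<and> i < j t \<and> j t < k) \<or> (t \<in> {1..n-2} \<and> p < j t \<and> j t < l))"
    using assms by fastforce
  then show ?thesis
    unfolding first_split_def using assms Least_disj_cases by simp
qed

lemma ext_Jt_iff:
  assumes j: "bij_betw j {1..n-2} {2..n-1}" and t: "t \<in> {1..n-2}"
    and "1 \<le> a" "c \<le> n" "a < j t" "j t < c"
  shows "a \<in> ext_block (Jt n j t) \<and> c \<in> ext_block (Jt n j t) \<longleftrightarrow>
    (\<forall>s\<in>{1..<t}. \<not> (a < j s \<and> j s < c))"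
proof -
  have "j t \<notin> j ` {1..<t}"
    using t bij_betw_imp_inj_on[OF j] by (auto simp: inj_on_eq_iff)
  then have "j t \<in> {2..n-1} - j ` {1..<t}"
    using t bij_betwE[OF j] by blast
  then have "a \<in> ext_block (Jt n j t) \<and> c \<in> ext_block (Jt n j t) \<longleftrightarrow>
      {a<..<c} \<subseteq> {2..n-1} - j ` {1..<t}"
    unfolding Jt_def using assms(5,6) by (intro ext_block_max_block_iff) simp_all
  also have "\<dots> \<longleftrightarrow> (\<forall>s\<in>{1..<t}. \<not> (a < j s \<and> j s < c))"
    using assms(3,4) by auto
  finally show ?thesis .
qed

lemma mem_Tt_iff:
  assumes j: "bij_betw j {1..n-2} {2..n-1}" and t: "t \<in> {1..n-2}"
  shows "X \<in> Tt n j t \<longleftrightarrow> X \<in> Lambda n \<and> first_split n j X = t"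
proof -
  have "X \<in> Tt n j t \<longleftrightarrow> (\<exists>a b c. X = {a, b, c} \<and> 1 \<le> a \<and> a < b \<and> b < c \<and> c \<le> n \<and>
      a < j t \<and> j t < c \<and> (\<forall>s\<in>{1..<t}. \<not> (a < j s \<and> j s < c)))"
    unfolding Tt_def using ext_Jt_iff[OF j t] by blast
  also have "\<dots> \<longleftrightarrow> (\<exists>a b c. X = {a, b, c} \<and> 1 \<le> a \<and> a < b \<and> b < c \<and> c \<le> n \<and>
      first_split n j {a, b, c} = t)"
    using first_split_eq_iff[OF j] t by blast
  also have "\<dots> \<longleftrightarrow> X \<in> Lambda n \<and> first_split n j X = t"
    unfolding Lambda_iff by blast
  finally show ?thesis .
qed

lemma TS_eq:
  assumes j: "bij_betw j {1..n-2} {2..n-1}" and S: "S \<subseteq> {1..n-2}"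
  shows "TS n j S = {X \<in> Lambda n. first_split n j X \<in> S}"
proof (rule set_eqI)
  fix X
  have "X \<in> TS n j S \<longleftrightarrow> (\<exists>t\<in>S. X \<in> Tt n j t)" unfolding TS_def by simp
  also have "\<dots> \<longleftrightarrow> (\<exists>t\<in>S. X \<in> Lambda n \<and> first_split n j X = t)"
    using mem_Tt_iff[OF j] S by (intro bex_cong) auto
  finally show "X \<in> TS n j S \<longleftrightarrow> X \<in> {X \<in> Lambda n. first_split n j X \<in> S}" by auto
qed

lemma domainD_eq_preimages:
  assumes "bij_betw j {1..n-2} {2..n-1}"
  shows "domainD n j = preimages (Lambda n) (first_split n j) {1..n-2}"
  unfolding domainD_def preimages_def by (intro image_cong refl) (simp add: TS_eq[OF assms])

theorem theorem3:
  fixes n :: nat and j :: "nat \<Rightarrow> nat"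
  assumes "n \<ge> 3"
    and "bij_betw j {1..n-2} {2..n-1}"
  shows "(\<forall>T \<in> domainD n j. tiling n T)
       \<and> card (domainD n j) = 2 ^ (n - 2)
       \<and> (\<forall>T \<in> domainD n j. Lambda n - T \<in> domainD n j)
       \<and> condorcet_super_domain n (domainD n j)"
proof -
  let ?D = "preimages (Lambda n) (first_split n j) {1..n-2}"
  have image: "first_split n j ` Lambda n = {1..n-2}"
    using first_split_image[OF assms(2)] .
  then have into: "first_split n j ` Lambda n \<subseteq> {1..n-2}" by simp
  have tilings: "tiling n T" if "T \<in> ?D" for T
    using that by (rule tiling_preimages[rotated]) (metis first_split_stick)
  moreover have "card ?D = 2 ^ (n - 2)"
    using card_preimages[OF image] by simp
  moreover have "Lambda n - T \<in> ?D" if "T \<in> ?D" for T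
    using Diff_preimages[OF into that] .
  moreover have "condorcet_super_domain n ?D"
    unfolding condorcet_super_domain_def
    using tilings sm_preimages[OF into] by blast
  ultimately show ?thesis
    unfolding domainD_eq_preimages[OF assms(2)] by blast
qed

end
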